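(* Let $A$ be a commutative quasi-ring and $I$ an ideal of $A$. The congruence class of $0$ modulo $I$ is equal to the heart $C(I)$ of $I$, and it is a closed ideal of $A$. In particular, if $I$ is closed, the class of $0$ modulo $I$ is $I$ itself.
   Context: A quasi-ring is a semiring (with $(A,+)$ a commutative monoid with neutral $0$, $(A,\cdot)$ a monoid with unit $1$, distributivity, $0$ absorbing) whose unit $1$ is quasi-invertible for addition (there is $y$ with $1+y+1=1$, $y+1+y=y$). An ideal is a subset containing $0$ stable under addition and under multiplication by elements of $A$. Congruence modulo $I$: $a\equiv b \pmod I$ iff $(a+I)\cap(b+I)\neq\emptyset$ and for all $c\in I$, $r\in A$: $ac+r\in I\iff bc+r\in I$. The closure of $I$ is $\overline I=\{x\in A : (x+I)\cap I\neq\emptyset\}$; $I$ is closed if $\overline I=I$ (equivalently: $(a+I)\cap I\neq\emptyset\Rightarrow a\in I$). The heart of $I$ is $C(I)=\{x\in\overline I : \forall \alpha\in I,\ \forall r\in A,\ x\alpha+r\in I\Rightarrow r\in I\}$. *)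

theory Defs
  imports Main
begin

text \<open>Commutative semirings with unit are modelled by the sort
  {comm_semiring_0, comm_monoid_mult} (commutative additive monoid, commutative
  multiplicative monoid, distributivity, 0 absorbing; 0 = 1 is allowed).
  Quasi-invertibility of 1 is an explicit hypothesis of the theorem.\<close>

definition qr_ideal :: "'a::{comm_semiring_0, comm_monoid_mult} set \<Rightarrow> bool" where
  "qr_ideal I \<longleftrightarrow> 0 \<in> I \<and> (\<forall>x\<in>I. \<forall>y\<in>I. x + y \<in> I) \<and> (\<forall>a. \<forall>x\<in>I. a * x \<in> I)"

definition qr_cong :: "'a::{comm_semiring_0, comm_monoid_mult} set \<Rightarrow> 'a \<Rightarrow> 'a \<Rightarrow> bool" where
  "qr_cong I a b \<longleftrightarrow> ((\<lambda>i. a + i) ` I \<inter> (\<lambda>i. b + i) ` I \<noteq> {}) \<and>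
      (\<forall>c\<in>I. \<forall>r. a * c + r \<in> I \<longleftrightarrow> b * c + r \<in> I)"

definition qr_closure :: "'a::{comm_semiring_0, comm_monoid_mult} set \<Rightarrow> 'a set" where
  "qr_closure I = {x. (\<lambda>i. x + i) ` I \<inter> I \<noteq> {}}"

definition qr_closed :: "'a::{comm_semiring_0, comm_monoid_mult} set \<Rightarrow> bool" where
  "qr_closed I \<longleftrightarrow> qr_closure I = I"

definition qr_heart :: "'a::{comm_semiring_0, comm_monoid_mult} set \<Rightarrow> 'a set" where
  "qr_heart I = {x \<in> qr_closure I. \<forall>\<alpha>\<in>I. \<forall>r. x * \<alpha> + r \<in> I \<longrightarrow> r \<in> I}"

end

theory Submission
  imports Defs
begin

text \<open>For an ideal I, the class of 0 modulo I is the heart C(I):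
  the first half of the congruence condition for (x, 0) says x lies in the
  closure of I, and the second half reduces to the heart condition because
  for c, r in I the element x c + r always lies in I.  We then check directly
  that C(I) contains 0 and is stable under sums and under multiplication by
  ring elements (the latter using commutativity), and that C(I) is closed:
  if x + c lies in C(I) with c in C(I), then x inherits both the closure
  witness and the cancellation property from x + c and c.  Finally, when I
  is closed, C(I) is contained in the closure of I, which is I, and conversely
  every element of I satisfies the heart condition since x a + r in I makes
  r an element of the closure of I.\<close>

lemma qr_idealD:
  assumes "qr_ideal I"
  shows qr_ideal_zero: "0 \<in> I"
    and qr_ideal_add: "\<And>x y. x \<in> I \<Longrightarrow> y \<in> I \<Longrightarrow> x + y \<in> I"
    and qr_ideal_mult: "\<And>a x. x \<in> I \<Longrightarrow> a * x \<in> I"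
  using assms unfolding qr_ideal_def by auto

lemma qr_closure_iff: "x \<in> qr_closure I \<longleftrightarrow> (\<exists>i\<in>I. x + i \<in> I)"
  unfolding qr_closure_def by blast

lemma qr_heart_iff:
  "x \<in> qr_heart I \<longleftrightarrow> (\<exists>i\<in>I. x + i \<in> I) \<and> (\<forall>\<alpha>\<in>I. \<forall>r. x * \<alpha> + r \<in> I \<longrightarrow> r \<in> I)"
  unfolding qr_heart_def qr_closure_iff by auto

text \<open>A set containing 0 lies inside its closure, so closedness only asks for
  the inclusion of the closure into the set.\<close>
lemma qr_closedI:
  assumes zero: "0 \<in> I" and absorb: "\<And>x i. i \<in> I \<Longrightarrow> x + i \<in> I \<Longrightarrow> x \<in> I"
  shows "qr_closed I"
proof -
  have "x \<in> qr_closure I" if "x \<in> I" for x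
    using that zero unfolding qr_closure_iff by (intro bexI[of _ 0]) simp_all
  moreover have "x \<in> I" if "x \<in> qr_closure I" for x
    using that absorb unfolding qr_closure_iff by blast
  ultimately show ?thesis unfolding qr_closed_def by blast
qed

lemma qr_closedD: "qr_closed I \<Longrightarrow> i \<in> I \<Longrightarrow> x + i \<in> I \<Longrightarrow> x \<in> I"
  unfolding qr_closed_def using qr_closure_iff by blast

lemma qr_cong_zero_iff_heart:
  assumes ideal: "qr_ideal I"
  shows "qr_cong I x 0 \<longleftrightarrow> x \<in> qr_heart I"
proof -
  have translates: "(\<lambda>i. x + i) ` I \<inter> (\<lambda>i. 0 + i) ` I \<noteq> {} \<longleftrightarrow> (\<exists>i\<in>I. x + i \<in> I)"
    by auto
  have "x * c + r \<in> I" if "c \<in> I" "r \<in> I" for c r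
    using qr_ideal_add[OF ideal qr_ideal_mult[OF ideal that(1)] that(2)] .
  then have cancel: "(\<forall>c\<in>I. \<forall>r. x * c + r \<in> I \<longleftrightarrow> 0 * c + r \<in> I) \<longleftrightarrow>
      (\<forall>\<alpha>\<in>I. \<forall>r. x * \<alpha> + r \<in> I \<longrightarrow> r \<in> I)"
    by auto
  show ?thesis
    unfolding qr_cong_def qr_heart_iff using translates cancel by blast
qed

lemma qr_heart_zero:
  assumes "qr_ideal I"
  shows "0 \<in> qr_heart I"
  using qr_ideal_zero[OF assms] unfolding qr_heart_iff by auto

lemma qr_heart_add:
  assumes ideal: "qr_ideal I" and x: "x \<in> qr_heart I" and y: "y \<in> qr_heart I"
  shows "x + y \<in> qr_heart I"
proof -
  obtain i where i: "i \<in> I" "x + i \<in> I" using x unfolding qr_heart_iff by blast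
  obtain j where j: "j \<in> I" "y + j \<in> I" using y unfolding qr_heart_iff by blast
  have "x + y + (i + j) = (x + i) + (y + j)" by (simp add: ac_simps)
  then have witness: "i + j \<in> I \<and> x + y + (i + j) \<in> I"
    using i j qr_ideal_add[OF ideal] by simp
  have "r \<in> I" if "(x + y) * \<alpha> + r \<in> I" "\<alpha> \<in> I" for \<alpha> r
  proof -
    have "x * \<alpha> + (y * \<alpha> + r) \<in> I"
      using that(1) by (simp add: distrib_right add.assoc)
    then have "y * \<alpha> + r \<in> I" using x that(2) unfolding qr_heart_iff by blast
    then show ?thesis using y that(2) unfolding qr_heart_iff by blast
  qed
  then show ?thesis unfolding qr_heart_iff using witness by blast
qed

text \<open>Stability under multiplication; commutativity moves the factor a onto the
  element of I that the heart condition quantifies over.\<close>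
lemma qr_heart_mult:
  assumes ideal: "qr_ideal I" and x: "x \<in> qr_heart I"
  shows "a * x \<in> qr_heart I"
proof -
  obtain i where i: "i \<in> I" "x + i \<in> I" using x unfolding qr_heart_iff by blast
  have "a * x + a * i = a * (x + i)" by (simp add: distrib_left)
  then have witness: "a * i \<in> I \<and> a * x + a * i \<in> I"
    using i qr_ideal_mult[OF ideal] by simp
  have "r \<in> I" if "(a * x) * \<alpha> + r \<in> I" "\<alpha> \<in> I" for \<alpha> r
  proof -
    have "x * (a * \<alpha>) + r \<in> I" using that(1) by (simp add: ac_simps)
    then show ?thesis
      using x qr_ideal_mult[OF ideal that(2)] unfolding qr_heart_iff by blast
  qed
  then show ?thesis unfolding qr_heart_iff using witness by blast
qed

lemma qr_ideal_heart:
  assumes "qr_ideal I"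
  shows "qr_ideal (qr_heart I)"
  unfolding qr_ideal_def
  using qr_heart_zero qr_heart_add qr_heart_mult assms by blast

text \<open>The heart is closed: from c and x + c in the heart, x inherits a closure
  witness and the cancellation property.\<close>
lemma qr_closed_heart:
  assumes ideal: "qr_ideal I"
  shows "qr_closed (qr_heart I)"
proof (rule qr_closedI[OF qr_heart_zero[OF ideal]])
  fix x c
  assume c: "c \<in> qr_heart I" and xc: "x + c \<in> qr_heart I"
  obtain i where i: "i \<in> I" "c + i \<in> I" using c unfolding qr_heart_iff by blast
  obtain j where j: "j \<in> I" "x + c + j \<in> I" using xc unfolding qr_heart_iff by blast
  have "x + (c + i + j) = (x + c + j) + i" by (simp add: ac_simps)
  then have witness: "c + i + j \<in> I \<and> x + (c + i + j) \<in> I"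
    using i j qr_ideal_add[OF ideal] by simp
  have "r \<in> I" if "x * \<alpha> + r \<in> I" "\<alpha> \<in> I" for \<alpha> r
  proof -
    have "(x * \<alpha> + r) + c * \<alpha> \<in> I"
      using qr_ideal_add[OF ideal that(1) qr_ideal_mult[OF ideal that(2)]] .
    moreover have "(x * \<alpha> + r) + c * \<alpha> = (x + c) * \<alpha> + r"
      by (simp add: algebra_simps)
    ultimately have "(x + c) * \<alpha> + r \<in> I" by simp
    then show ?thesis using xc that(2) unfolding qr_heart_iff by blast
  qed
  then show "x \<in> qr_heart I" unfolding qr_heart_iff using witness by blast
qed

lemma qr_heart_of_closed:
  assumes ideal: "qr_ideal I" and closed: "qr_closed I"
  shows "qr_heart I = I"
proof
  show "qr_heart I \<subseteq> I"
    using closed unfolding qr_closed_def qr_heart_def by auto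
  show "I \<subseteq> qr_heart I"
  proof
    fix x assume x: "x \<in> I"
    have "r \<in> I" if "x * \<alpha> + r \<in> I" "\<alpha> \<in> I" for \<alpha> r
      using qr_closedD[OF closed qr_ideal_mult[OF ideal x, of \<alpha>]] that(1)
      by (simp add: ac_simps)
    moreover have "0 \<in> I \<and> x + 0 \<in> I" using x qr_ideal_zero[OF ideal] by simp
    ultimately show "x \<in> qr_heart I" unfolding qr_heart_iff by blast
  qed
qed

theorem proposition2p3:
  fixes I :: "'a::{comm_semiring_0, comm_monoid_mult} set"
  assumes quasi_inv_one: "\<exists>y::'a. 1 + y + 1 = 1 \<and> y + 1 + y = y"
    and ideal: "qr_ideal I"
  shows "{x. qr_cong I x 0} = qr_heart I
         \<and> qr_ideal {x. qr_cong I x 0} \<and> qr_closed {x. qr_cong I x 0}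
         \<and> (qr_closed I \<longrightarrow> {x. qr_cong I x 0} = I)"
proof -
  have class_is_heart: "{x. qr_cong I x 0} = qr_heart I"
    using qr_cong_zero_iff_heart[OF ideal] by auto
  show ?thesis
    unfolding class_is_heart
    using qr_ideal_heart[OF ideal] qr_closed_heart[OF ideal] qr_heart_of_closed[OF ideal]
    by simp
qed

end
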